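(* There exists a finite set of points $X \subset \mathbb{R}^2$ together with a point $x \in X$ and a noncrossing tour $T$ through $X \setminus \{x\}$ (i.e., through all but one of the points) such that every noncrossing tour through all points of $X$ has length strictly less than $\ell(T)$.
   Context: For a finite set of points in $\mathbb{R}^2$, a tour is a Hamiltonian cycle on them; the length of an edge $\{a,b\}$ is the Euclidean distance $d(a,b)$ and $\ell(T)$ is the sum of the edge lengths of $T$. For an edge $e=\{a,b\}$, $L(e)$ denotes the closed line segment from $a$ to $b$. A tour is noncrossing if no two of its edges have intersecting line segments (other than at a shared endpoint). *)

theory Defs
  imports "HOL-Analysis.Analysis"
begin

type_synonym point = "real^2"

definition is_tour :: "point set \<Rightarrow> point list \<Rightarrow> bool" where
  "is_tour X xs \<longleftrightarrow> distinct xs \<and> set xs = X \<and> length xs \<ge> 3"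

definition tour_edges :: "point list \<Rightarrow> point set set" where
  "tour_edges xs = {{xs ! i, xs ! ((i + 1) mod length xs)} | i. i < length xs}"

definition seg :: "point set \<Rightarrow> point set" where
  "seg e = \<Union>{closed_segment a b | a b. e = {a, b}}"

definition edge_len :: "point set \<Rightarrow> real" where
  "edge_len e = (THE d. \<exists>a b. e = {a, b} \<and> d = dist a b)"

definition tour_length :: "point list \<Rightarrow> real" where
  "tour_length xs = (\<Sum>e\<in>tour_edges xs. edge_len e)"

definition noncrossing :: "point list \<Rightarrow> bool" where
  "noncrossing xs \<longleftrightarrow> (\<forall>e\<in>tour_edges xs. \<forall>f\<in>tour_edges xs. e \<noteq> f \<longrightarrow> seg e \<inter> seg f \<subseteq> e \<inter> f)"

end

theory Submission
  imports Defs
begin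

(* Take three spokes from the origin o in the directions (1,0), (0,1), (-1,-1), each carrying
  a near point p_k = e_k and a far point q_k = 1000 e_k. The hexagon p1 q1 p2 q2 p3 q3 is a
  noncrossing tour of the six points other than o, of length more than 6825.
  In a noncrossing tour of all seven points, o is never adjacent to a far point q_k, because
  p_k lies on the segment o q_k. Every other pair satisfies d(u,v) \<le> w(u) + w(v) + 2 for the
  weights w(o) = -87, w(p_k) = 89, w(q1) = w(q2) = 911, w(q3) = 1326; as each vertex lies on
  two edges of a tour, summing over its seven edges bounds its length by 2 \<Sigma> w + 14 = 6670. *)

lemma seg_doubleton [simp]: "seg {a, b} = closed_segment a b"
  unfolding seg_def by (auto simp: doubleton_eq_iff closed_segment_commute)

lemma edge_len_doubleton [simp]: "edge_len {a, b} = dist a b"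
  unfolding edge_len_def by (rule the_equality) (auto simp: doubleton_eq_iff dist_commute)

lemma tour_edges_eq_image:
  "tour_edges xs = (\<lambda>i. {xs ! i, xs ! (Suc i mod length xs)}) ` {..<length xs}"
  unfolding tour_edges_def by auto

lemma nth_edge_in_tour_edges:
  "i < length xs \<Longrightarrow> {xs ! i, xs ! (Suc i mod length xs)} \<in> tour_edges xs"
  unfolding tour_edges_eq_image by simp

lemma two_cycle_Suc_mod_le_2:
  fixes i j n :: nat
  assumes "i < n" "i = Suc j mod n" "j = Suc i mod n"
  shows "n \<le> 2"
proof -
  have "(i + 2) mod n = i mod n"
    using assms(2)[unfolded assms(3) mod_Suc_eq] assms(1) by simp
  then have "n dvd 2"
    using mod_eq_dvd_iff_nat[of i "i + 2" n] by simp
  then show ?thesis by (simp add: dvd_imp_le)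
qed

lemma inj_on_tour_edge:
  assumes "distinct xs" "3 \<le> length xs"
  shows "inj_on (\<lambda>i. {xs ! i, xs ! (Suc i mod length xs)}) {..<length xs}"
proof
  fix i j
  assume i: "i \<in> {..<length xs}" and j: "j \<in> {..<length xs}"
    and eq: "{xs ! i, xs ! (Suc i mod length xs)} = {xs ! j, xs ! (Suc j mod length xs)}"
  have nth_inj: "xs ! k = xs ! l \<longleftrightarrow> k = l" if "k < length xs" "l < length xs" for k l
    using assms(1) that by (simp add: nth_eq_iff_index_eq)
  show "i = j"
  proof (rule ccontr)
    assume "i \<noteq> j"
    with i j have "xs ! i \<noteq> xs ! j"
      by (simp add: nth_inj)
    with eq have ij: "xs ! i = xs ! (Suc j mod length xs)" and ji: "xs ! (Suc i mod length xs) = xs ! j"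
      by (auto simp: doubleton_eq_iff)
    have pos: "0 < length xs"
      using assms(2) by linarith
    have "i = Suc j mod length xs"
      using nth_inj[of i "Suc j mod length xs"] ij i pos by simp
    moreover have "j = Suc i mod length xs"
      using nth_inj[of "Suc i mod length xs" j] ji j pos by simp
    ultimately have "length xs \<le> 2"
      using i by (intro two_cycle_Suc_mod_le_2) simp_all
    with assms(2) show False by simp
  qed
qed

lemma tour_length_eq_sum_dist:
  assumes "distinct xs" "3 \<le> length xs"
  shows "tour_length xs = (\<Sum>i<length xs. dist (xs ! i) (xs ! (Suc i mod length xs)))"
  unfolding tour_length_def tour_edges_eq_image
  by (simp add: sum.reindex[OF inj_on_tour_edge[OF assms]])

lemma sum_nth_Suc_mod:
  "(\<Sum>i<length xs. f (xs ! (Suc i mod length xs))) = (\<Sum>i<length xs. f (xs ! i))"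
proof -
  have "(\<Sum>i<length xs. f (xs ! (Suc i mod length xs))) = (\<Sum>i<length xs. f (rotate1 xs ! i))"
    by (intro sum.cong) (auto simp: nth_rotate1)
  also have "\<dots> = sum_list (map f (rotate1 xs))"
    by (simp add: sum_list_sum_nth atLeast0LessThan)
  also have "\<dots> = sum_list (map f xs)"
    by (cases xs) (simp_all add: add.commute)
  also have "\<dots> = (\<Sum>i<length xs. f (xs ! i))"
    by (simp add: sum_list_sum_nth atLeast0LessThan)
  finally show ?thesis .
qed

lemma tour_length_le_potential:
  assumes "distinct xs" "3 \<le> length xs"
    and edge_le: "\<And>u v. {u, v} \<in> tour_edges xs \<Longrightarrow> dist u v \<le> w u + w v + c"
  shows "tour_length xs \<le> 2 * sum w (set xs) + c * length xs"
proof -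
  let ?n = "length xs"
  have "tour_length xs = (\<Sum>i<?n. dist (xs ! i) (xs ! (Suc i mod ?n)))"
    by (rule tour_length_eq_sum_dist[OF assms(1,2)])
  also have "\<dots> \<le> (\<Sum>i<?n. w (xs ! i) + w (xs ! (Suc i mod ?n)) + c)"
    by (intro sum_mono edge_le nth_edge_in_tour_edges) simp
  also have "\<dots> = 2 * (\<Sum>i<?n. w (xs ! i)) + c * ?n"
    by (simp add: sum.distrib sum_nth_Suc_mod)
  also have "(\<Sum>i<?n. w (xs ! i)) = sum w (set xs)"
    using assms(1) by (simp add: sum.distinct_set_conv_list sum_list_sum_nth atLeast0LessThan)
  finally show ?thesis .
qed

lemma tour_edge_endpoints:
  assumes "{u, v} \<in> tour_edges xs" "distinct xs" "2 \<le> length xs"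
  shows "u \<noteq> v" "u \<in> set xs" "v \<in> set xs"
proof -
  obtain i where i: "i < length xs" and uv: "{u, v} = {xs ! i, xs ! (Suc i mod length xs)}"
    using assms(1) unfolding tour_edges_eq_image by blast
  have "Suc i mod length xs \<noteq> i"
    using i assms(3) by (cases "Suc i = length xs") auto
  moreover have i': "Suc i mod length xs < length xs"
    using i by (auto intro: mod_less_divisor)
  ultimately have "xs ! i \<noteq> xs ! (Suc i mod length xs)"
    using i assms(2) by (simp add: nth_eq_iff_index_eq)
  with uv i i' show "u \<noteq> v" "u \<in> set xs" "v \<in> set xs"
    by (auto simp: doubleton_eq_iff)
qed

lemma noncrossingD:
  "noncrossing xs \<Longrightarrow> e \<in> tour_edges xs \<Longrightarrow> f \<in> tour_edges xs \<Longrightarrow> e \<noteq> f \<Longrightarrow>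
    seg e \<inter> seg f \<subseteq> e \<inter> f"
  unfolding noncrossing_def by auto

lemma noncrossing_vertex_on_edge:
  assumes "noncrossing xs" "{a, b} \<in> tour_edges xs" "c \<in> set xs" "c \<in> closed_segment a b"
  shows "c = a \<or> c = b"
proof -
  obtain j where j: "j < length xs" "xs ! j = c"
    using assms(3) by (auto simp: in_set_conv_nth)
  define f where "f = {c, xs ! (Suc j mod length xs)}"
  have f: "f \<in> tour_edges xs"
    unfolding f_def using nth_edge_in_tour_edges[OF j(1)] j(2) by simp
  have "c \<in> {a, b}"
  proof (cases "{a, b} = f")
    case True
    then show ?thesis by (simp add: f_def)
  next
    case False
    have "c \<in> seg {a, b} \<inter> seg f"
      using assms(4) by (simp add: f_def)
    then show ?thesis
      using noncrossingD[OF assms(1,2) f False] by blast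
  qed
  then show ?thesis by simp
qed

lemma noncrossingI:
  fixes xs :: "point list"
  defines "edge i \<equiv> {xs ! i, xs ! (Suc i mod length xs)}"
  assumes "\<And>i j. i < j \<Longrightarrow> j < length xs \<Longrightarrow> seg (edge i) \<inter> seg (edge j) \<subseteq> edge i \<inter> edge j"
  shows "noncrossing xs"
proof -
  have "seg (edge i) \<inter> seg (edge j) \<subseteq> edge i \<inter> edge j"
    if "i < length xs" "j < length xs" "edge i \<noteq> edge j" for i j
  proof (cases i j rule: linorder_cases)
    case less
    with that assms(2) show ?thesis by blast
  next
    case equal
    with that show ?thesis by simp
  next
    case greater
    with that assms(2)[of j i] show ?thesis by (simp add: Int_commute)
  qed
  then show ?thesis
    unfolding noncrossing_def tour_edges_eq_image edge_def[symmetric] by blast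
qed

lemma vec2_eq_iff: "(x :: real^2) = y \<longleftrightarrow> x $ 1 = y $ 1 \<and> x $ 2 = y $ 2"
  by (simp add: vec_eq_iff forall_2)

lemma dist_vec2: "dist (x :: real^2) y = sqrt ((x $ 1 - y $ 1)\<^sup>2 + (x $ 2 - y $ 2)\<^sup>2)"
  by (simp add: dist_vec_def L2_set_def sum_2 dist_real_def)

lemma in_closed_segment_vec2:
  "(z :: real^2) \<in> closed_segment a b \<longleftrightarrow>
     (\<exists>u. 0 \<le> u \<and> u \<le> 1 \<and> z $ 1 = (1 - u) * a $ 1 + u * b $ 1 \<and> z $ 2 = (1 - u) * a $ 2 + u * b $ 2)"
  by (simp add: in_segment vec2_eq_iff)

definition origin :: point where "origin = vector [0, 0]"
definition p1 :: point where "p1 = vector [1, 0]"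
definition p2 :: point where "p2 = vector [0, 1]"
definition p3 :: point where "p3 = vector [-1, -1]"
definition q1 :: point where "q1 = vector [1000, 0]"
definition q2 :: point where "q2 = vector [0, 1000]"
definition q3 :: point where "q3 = vector [-1000, -1000]"

lemmas spike_defs = origin_def p1_def p2_def p3_def q1_def q2_def q3_def

definition spikes :: "point set" where
  "spikes = {origin, p1, p2, p3, q1, q2, q3}"

definition hexagon :: "point list" where
  "hexagon = [p1, q1, p2, q2, p3, q3]"

definition spike_weight :: "point \<Rightarrow> real" where
  "spike_weight v =
     (if v = origin then -87 else if v = q1 \<or> v = q2 then 911 else if v = q3 then 1326 else 89)"

lemma distinct_spikes: "distinct [origin, p1, p2, p3, q1, q2, q3]"
  by (simp add: spike_defs vec2_eq_iff)

lemma spike_weight_simps [simp]: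
  "spike_weight origin = -87" "spike_weight p1 = 89" "spike_weight p2 = 89" "spike_weight p3 = 89"
  "spike_weight q1 = 911" "spike_weight q2 = 911" "spike_weight q3 = 1326"
  using distinct_spikes by (auto simp: spike_weight_def)

lemma inner_spikes_on_spokes:
  "p1 \<in> closed_segment origin q1" "p2 \<in> closed_segment origin q2" "p3 \<in> closed_segment origin q3"
  by (auto simp: in_closed_segment_vec2 spike_defs intro!: exI[of _ "1/1000"])

lemma spike_edge_bound:
  assumes "u \<in> spikes" "v \<in> spikes" "u \<noteq> v"
    and "u = origin \<Longrightarrow> v \<notin> {q1, q2, q3}" "v = origin \<Longrightarrow> u \<notin> {q1, q2, q3}"
  shows "dist u v \<le> spike_weight u + spike_weight v + 2"
  using assms distinct_spikes unfolding spikes_def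
  by (elim insertE emptyE; simp; simp add: spike_defs dist_vec2 real_le_lsqrt)

(* For concrete segments, a common point is a pair of segment parameters solving two linear
  equations, so each of the 15 edge pairs is a linear-arithmetic check. *)
lemma noncrossing_hexagon: "noncrossing hexagon"
  by (rule noncrossingI)
    (auto simp: hexagon_def less_Suc_eq spike_defs in_closed_segment_vec2 vec2_eq_iff)

lemma is_tour_hexagon: "is_tour (spikes - {origin}) hexagon"
  unfolding is_tour_def hexagon_def spikes_def
  using distinct_spikes by auto

lemma hexagon_length_ge: "6825 \<le> tour_length hexagon"
proof -
  have "distinct hexagon" "3 \<le> length hexagon"
    using is_tour_hexagon by (simp_all add: is_tour_def)
  then have "tour_length hexagon =
      dist p1 q1 + dist q1 p2 + dist p2 q2 + dist q2 p3 + dist p3 q3 + dist q3 p1"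
    by (simp add: tour_length_eq_sum_dist hexagon_def)
  moreover have "999 \<le> dist p1 q1" "1000 \<le> dist q1 p2" "999 \<le> dist p2 q2"
    "1001 \<le> dist q2 p3" "1412 \<le> dist p3 q3" "1414 \<le> dist q3 p1"
    by (simp_all add: spike_defs dist_vec2 real_le_rsqrt)
  ultimately show ?thesis by linarith
qed

lemma noncrossing_spike_tour_avoids_spokes:
  assumes "is_tour spikes T" "noncrossing T" "{origin, q} \<in> tour_edges T"
  shows "q \<notin> {q1, q2, q3}"
proof
  assume q: "q \<in> {q1, q2, q3}"
  then obtain p where p: "p \<in> {p1, p2, p3}" "p \<in> closed_segment origin q"
    using inner_spikes_on_spokes by blast
  moreover have "p \<in> set T"
    using assms(1) p(1) unfolding is_tour_def spikes_def by auto
  ultimately have "p = origin \<or> p = q"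
    using noncrossing_vertex_on_edge[OF assms(2,3)] by blast
  with p(1) q distinct_spikes show False
    by auto
qed

lemma sum_spike_weight: "sum spike_weight spikes = 3328"
  using distinct_spikes by (simp add: spikes_def)

lemma noncrossing_spike_tour_length_le:
  assumes T: "is_tour spikes T" and nc: "noncrossing T"
  shows "tour_length T \<le> 6670"
proof -
  have dT: "distinct T" and sT: "set T = spikes" and lT: "3 \<le> length T"
    using T unfolding is_tour_def by auto
  have "length T = 7"
    using distinct_card[OF dT] distinct_card[OF distinct_spikes] sT by (simp add: spikes_def)
  have "dist u v \<le> spike_weight u + spike_weight v + 2" if uv: "{u, v} \<in> tour_edges T" for u v
  proof (rule spike_edge_bound)
    show "u \<in> spikes" "v \<in> spikes" "u \<noteq> v"
      using tour_edge_endpoints[OF uv dT] lT sT by auto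
    have vu: "{v, u} \<in> tour_edges T"
      using uv by (simp add: insert_commute)
    show "v \<notin> {q1, q2, q3}" if "u = origin"
      using noncrossing_spike_tour_avoids_spokes[OF T nc] uv that by blast
    show "u \<notin> {q1, q2, q3}" if "v = origin"
      using noncrossing_spike_tour_avoids_spokes[OF T nc] vu that by blast
  qed
  then have "tour_length T \<le> 2 * sum spike_weight (set T) + 2 * real (length T)"
    by (rule tour_length_le_potential[OF dT lT])
  with sT \<open>length T = 7\<close> show ?thesis
    by (simp add: sum_spike_weight)
qed

theorem theorem2:
  shows "\<exists>(X :: point set) x T. finite X \<and> x \<in> X \<and>
           is_tour (X - {x}) T \<and> noncrossing T \<and>
           (\<forall>T'. is_tour X T' \<and> noncrossing T' \<longrightarrow> tour_length T' < tour_length T)"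
proof (intro exI conjI allI impI)
  show "finite spikes" "origin \<in> spikes"
    by (simp_all add: spikes_def)
  show "is_tour (spikes - {origin}) hexagon"
    by (rule is_tour_hexagon)
  show "noncrossing hexagon"
    by (rule noncrossing_hexagon)
  fix T assume "is_tour spikes T \<and> noncrossing T"
  then show "tour_length T < tour_length hexagon"
    using noncrossing_spike_tour_length_le hexagon_length_ge by fastforce
qed

end
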